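(* Let $\mathfrak{g} = \mathfrak{r}_3$, the three-dimensional Lie algebra with basis $\{e_1,e_2,e_3\}$ and nonzero brackets $[e_1,e_2]=e_2+e_3$, $[e_1,e_3]=e_3$. For every inner product $\langle\cdot,\cdot\rangle$ on $\mathfrak{g}$, there exist $\lambda > 0$, $k > 0$, and an orthonormal basis $\{x_1, x_2, x_3\}$ with respect to $k \langle\cdot,\cdot\rangle$ such that the bracket relations are given by \[ [x_1,x_2] = x_2 + \lambda x_3, \quad [x_1,x_3] = x_3 \] (and $[x_2,x_3]=0$). Furthermore, the matrix expression of the derivation algebra $\mathrm{Der}(\mathfrak{g})$ with respect to $\{x_1, x_2, x_3\}$ coincides with \[ \left\{ \begin{pmatrix} 0 & 0 & 0 \\ x_{21} & x_{22} & 0 \\ x_{31} & x_{32} & x_{22} \end{pmatrix} \;\middle|\; x_{21}, x_{22}, x_{31}, x_{32} \in \mathbb{R} \right\}. \] *)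

theory Defs
  imports "HOL-Analysis.Analysis"
begin

definition r3_e1 :: "real^3" where "r3_e1 = vector [1, 0, 0]"
definition r3_e2 :: "real^3" where "r3_e2 = vector [0, 1, 0]"
definition r3_e3 :: "real^3" where "r3_e3 = vector [0, 0, 1]"

text \<open>Bilinear, skew extension of [e1,e2] = e2 + e3, [e1,e3] = e3, [e2,e3] = 0:
  [a,b] = (a1 b2 - a2 b1)(e2 + e3) + (a1 b3 - a3 b1) e3.\<close>
definition r3_bracket :: "real^3 \<Rightarrow> real^3 \<Rightarrow> real^3" where
  "r3_bracket a b =
     (a$1 * b$2 - a$2 * b$1) *\<^sub>R (r3_e2 + r3_e3) + (a$1 * b$3 - a$3 * b$1) *\<^sub>R r3_e3"

definition inner_product_on :: "(real^3 \<Rightarrow> real^3 \<Rightarrow> real) \<Rightarrow> bool" where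
  "inner_product_on B \<longleftrightarrow> bilinear B \<and> (\<forall>x y. B x y = B y x) \<and> (\<forall>x. x \<noteq> 0 \<longrightarrow> 0 < B x x)"

definition r3_derivation :: "(real^3 \<Rightarrow> real^3) \<Rightarrow> bool" where
  "r3_derivation D \<longleftrightarrow> linear D \<and>
     (\<forall>a b. D (r3_bracket a b) = r3_bracket (D a) b + r3_bracket a (D b))"

text \<open>Matrix expression of Der(r_3) w.r.t. a basis xb: M is the matrix of D
  when D (xb j) = sum_i M_ij xb i (j-th column = coordinates of D xb_j).\<close>
definition der_matrices :: "(3 \<Rightarrow> real^3) \<Rightarrow> (real^3^3) set" where
  "der_matrices xb = {M. \<exists>D. r3_derivation D \<and>
      (\<forall>j. D (xb j) = (\<Sum>i\<in>UNIV. (M$i$j) *\<^sub>R xb i))}"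

end

theory Submission
  imports Defs
begin

text \<open>Gram--Schmidt applied to \<open>e\<^sub>3, e\<^sub>2, e\<^sub>1\<close> in this order yields a
  \<open>B\<close>-orthogonal basis \<open>u\<^sub>1 \<in> e\<^sub>1 + \<langle>e\<^sub>2, e\<^sub>3\<rangle>\<close>, \<open>u\<^sub>2 \<in> e\<^sub>2 + \<langle>e\<^sub>3\<rangle>\<close>, \<open>e\<^sub>3\<close>.
  Any \<open>u\<close> with first coordinate \<open>1\<close> acts on the ideal \<open>\<langle>e\<^sub>2, e\<^sub>3\<rangle>\<close> by
  \<open>b \<mapsto> b + b\<^sub>2 e\<^sub>3\<close>, so \<open>[u\<^sub>1, u\<^sub>2] = u\<^sub>2 + e\<^sub>3\<close> and \<open>[u\<^sub>1, e\<^sub>3] = e\<^sub>3\<close>; rescaling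
  \<open>u\<^sub>2\<close> and \<open>e\<^sub>3\<close> to the length of \<open>u\<^sub>1\<close> turns the coefficient of \<open>e\<^sub>3\<close> into
  \<open>\<lambda> > 0\<close>. In such a basis the Leibniz rule on the three basis pairs, read in
  coordinates, forces the stated matrix shape; conversely each such matrix defines a
  linear map satisfying the Leibniz rule on basis pairs, hence everywhere by bilinearity.\<close>

lemma dual_family_inj:
  fixes xb :: "'i \<Rightarrow> 'a::real_vector" and cf :: "'i \<Rightarrow> 'a \<Rightarrow> real"
  assumes "\<And>m j. cf m (xb j) = (if m = j then 1 else 0)"
  shows "inj xb"
proof (rule injI)
  fix i j assume "xb i = xb j"
  then have "cf i (xb i) = cf i (xb j)" by simp
  then show "i = j" using assms by (simp split: if_splits)
qed

lemma dual_family_independent: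
  fixes xb :: "'i::finite \<Rightarrow> 'a::real_vector" and cf :: "'i \<Rightarrow> 'a \<Rightarrow> real"
  assumes lin: "\<And>m. linear (cf m)"
    and dual: "\<And>m j. cf m (xb j) = (if m = j then 1 else 0)"
  shows "independent (range xb)"
proof (rule independent_if_scalars_zero)
  fix f x assume zero: "(\<Sum>x\<in>range xb. f x *\<^sub>R x) = 0" and "x \<in> range xb"
  then obtain m where x: "x = xb m" by blast
  have "(\<Sum>i\<in>UNIV. f (xb i) *\<^sub>R xb i) = 0"
    using zero sum.reindex[OF dual_family_inj[OF dual], of "\<lambda>x. f x *\<^sub>R x"] by simp
  then have "cf m (\<Sum>i\<in>UNIV. f (xb i) *\<^sub>R xb i) = 0"
    using linear_0[OF lin] by simp
  then show "f x = 0"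
    by (simp add: x linear_sum[OF lin] linear_scale[OF lin] dual if_distrib cong: if_cong)
qed simp

lemma dual_family_span:
  fixes xb :: "'i::finite \<Rightarrow> 'a::euclidean_space" and cf :: "'i \<Rightarrow> 'a \<Rightarrow> real"
  assumes "\<And>m. linear (cf m)"
    and dual: "\<And>m j. cf m (xb j) = (if m = j then 1 else 0)"
    and "CARD('i) = DIM('a)"
  shows "span (range xb) = UNIV"
proof -
  have "card (range xb) = dim (UNIV :: 'a set)"
    using card_image[OF dual_family_inj[OF dual]] assms(3) by (simp add: dim_UNIV)
  then show ?thesis
    using card_eq_dim[of "range xb" UNIV] dual_family_independent[OF assms(1,2)] by auto
qed

lemma dual_family_linear_extension:
  fixes xb :: "'i::finite \<Rightarrow> 'a::real_vector" and cf :: "'i \<Rightarrow> 'a \<Rightarrow> real"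
    and c :: "'i \<Rightarrow> 'b::real_vector"
  assumes lin: "\<And>m. linear (cf m)"
    and dual: "\<And>m j. cf m (xb j) = (if m = j then 1 else 0)"
  obtains D where "linear D" and "\<And>j. D (xb j) = c j"
proof
  show "linear (\<lambda>v. \<Sum>m\<in>UNIV. cf m v *\<^sub>R c m)"
    by (intro linear_compose_sum ballI linear_compose[OF lin linear_scaleR_left, unfolded o_def])
  show "(\<Sum>m\<in>UNIV. cf m (xb j) *\<^sub>R c m) = c j" for j
    by (simp add: dual if_distrib[of "\<lambda>r. r *\<^sub>R _"] cong: if_cong)
qed

lemma r3_bracket_eq:
  "r3_bracket a b =
     vector [0, a$1 * b$2 - a$2 * b$1, (a$1 * b$2 - a$2 * b$1) + (a$1 * b$3 - a$3 * b$1)]"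
  by (simp add: r3_bracket_def r3_e2_def r3_e3_def vec_eq_iff forall_3 algebra_simps)

lemma r3_bracket_add_left [simp]: "r3_bracket (a + c) b = r3_bracket a b + r3_bracket c b"
  and r3_bracket_add_right [simp]: "r3_bracket a (b + c) = r3_bracket a b + r3_bracket a c"
  and r3_bracket_scaleR_left [simp]: "r3_bracket (r *\<^sub>R a) b = r *\<^sub>R r3_bracket a b"
  and r3_bracket_scaleR_right [simp]: "r3_bracket a (r *\<^sub>R b) = r *\<^sub>R r3_bracket a b"
  and r3_bracket_self [simp]: "r3_bracket a a = 0"
  and r3_bracket_skew: "r3_bracket b a = - r3_bracket a b"
  by (simp_all add: r3_bracket_eq vec_eq_iff forall_3 algebra_simps)

lemma r3_bracket_first_coord_one:
  "a$1 = 1 \<Longrightarrow> b$1 = 0 \<Longrightarrow> r3_bracket a b = b + b$2 *\<^sub>R r3_e3"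
  by (simp add: r3_bracket_eq r3_e3_def vec_eq_iff forall_3)

lemma r3_bracket_first_coord_zero: "a$1 = 0 \<Longrightarrow> b$1 = 0 \<Longrightarrow> r3_bracket a b = 0"
  by (simp add: r3_bracket_eq vec_eq_iff forall_3)

lemma r3_derivation_if_spanning:
  assumes "linear D" and "span S = UNIV"
    and "\<And>x y. x \<in> S \<Longrightarrow> y \<in> S \<Longrightarrow>
           D (r3_bracket x y) = r3_bracket (D x) y + r3_bracket x (D y)"
  shows "r3_derivation D"
proof -
  have "bilinear (\<lambda>a b. D (r3_bracket a b))"
    using assms(1) unfolding bilinear_def by (auto intro!: linearI simp: linear_add linear_scale)
  moreover have "bilinear (\<lambda>a b. r3_bracket (D a) b + r3_bracket a (D b))"
    using assms(1) unfolding bilinear_def by (auto intro!: linearI simp: linear_add linear_scale)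
  ultimately have "D (r3_bracket a b) = r3_bracket (D a) b + r3_bracket a (D b)" for a b
    by (rule bilinear_eq[of _ _ UNIV S UNIV S]) (simp_all add: assms)
  then show ?thesis
    using assms(1) by (simp add: r3_derivation_def)
qed

text \<open>The entries of a derivation matrix are read off through linear coordinate
  functionals \<open>cf\<close> dual to the basis; for an orthonormal basis these are \<open>\<langle>x\<^sub>m, \<cdot>\<rangle>\<close>.\<close>

locale r3_adapted_basis =
  fixes xb :: "3 \<Rightarrow> real^3" and cf :: "3 \<Rightarrow> real^3 \<Rightarrow> real" and lam :: real
  assumes coord_linear: "\<And>m. linear (cf m)"
    and coord_basis [simp]: "\<And>m j. cf m (xb j) = (if m = j then 1 else 0)"
    and lam_nonzero: "lam \<noteq> 0"
    and bracket_12: "r3_bracket (xb 1) (xb 2) = xb 2 + lam *\<^sub>R xb 3"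
    and bracket_13: "r3_bracket (xb 1) (xb 3) = xb 3"
    and bracket_23: "r3_bracket (xb 2) (xb 3) = 0"
begin

lemmas coord_simps [simp] =
  linear_add[OF coord_linear] linear_scale[OF coord_linear] linear_0[OF coord_linear]
  linear_neg[OF coord_linear] linear_diff[OF coord_linear]

lemma brackets:
  "r3_bracket (xb 1) (xb 2) = xb 2 + lam *\<^sub>R xb 3"
  "r3_bracket (xb 1) (xb 3) = xb 3"
  "r3_bracket (xb 2) (xb 3) = 0"
  "r3_bracket (xb 2) (xb 1) = - xb 2 - lam *\<^sub>R xb 3"
  "r3_bracket (xb 3) (xb 1) = - xb 3"
  "r3_bracket (xb 3) (xb 2) = 0"
  using bracket_12 bracket_13 bracket_23
    r3_bracket_skew[of "xb 2" "xb 1"] r3_bracket_skew[of "xb 3" "xb 1"] r3_bracket_skew[of "xb 3" "xb 2"]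
  by simp_all

lemma derivation_matrix_shape:
  assumes der: "r3_derivation D"
    and mat: "\<And>j. D (xb j) = (\<Sum>i\<in>UNIV. M$i$j *\<^sub>R xb i)"
  shows "\<exists>x21 x22 x31 x32.
           M = vector [vector [0, 0, 0], vector [x21, x22, 0], vector [x31, x32, x22]]"
proof -
  have lin: "linear D"
    and leibniz: "\<And>a b. D (r3_bracket a b) = r3_bracket (D a) b + r3_bracket a (D b)"
    using der unfolding r3_derivation_def by blast+
  have expand: "D (xb j) = M$1$j *\<^sub>R xb 1 + M$2$j *\<^sub>R xb 2 + M$3$j *\<^sub>R xb 3" for j
    using mat[of j] by (simp add: sum_3)
  have E12: "D (xb 2) + lam *\<^sub>R D (xb 3) =
               r3_bracket (D (xb 1)) (xb 2) + r3_bracket (xb 1) (D (xb 2))"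
    using leibniz[of "xb 1" "xb 2"] by (simp add: bracket_12 linear_add[OF lin] linear_scale[OF lin])
  have E13: "D (xb 3) = r3_bracket (D (xb 1)) (xb 3) + r3_bracket (xb 1) (D (xb 3))"
    using leibniz[of "xb 1" "xb 3"] by (simp add: bracket_13)
  have E23: "r3_bracket (D (xb 2)) (xb 3) + r3_bracket (xb 2) (D (xb 3)) = 0"
    using leibniz[of "xb 2" "xb 3"] by (simp add: bracket_23 linear_0[OF lin])
  have m13: "M$1$3 = 0"
    using arg_cong[OF E13, of "cf 1"] by (simp add: expand brackets)
  have "M$1$1 + lam * M$2$3 = 0"
    using arg_cong[OF E13, of "cf 3"] by (simp add: expand brackets mult.commute)
  moreover have "lam * M$2$3 = M$1$1"
    using arg_cong[OF E12, of "cf 2"] by (simp add: expand brackets)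
  ultimately have m11: "M$1$1 = 0" and m23: "M$2$3 = 0"
    using lam_nonzero by auto
  have m12: "M$1$2 = 0"
    using arg_cong[OF E23, of "cf 3"] m13 by (simp add: expand brackets)
  have "lam * M$3$3 = lam * M$1$1 + lam * M$2$2"
    using arg_cong[OF E12, of "cf 3"] by (simp add: expand brackets)
  then have m33: "M$3$3 = M$2$2"
    using m11 lam_nonzero by simp
  show ?thesis
    using m11 m12 m13 m23 m33
    by (intro exI[of _ "M$2$1"] exI[of _ "M$2$2"] exI[of _ "M$3$1"] exI[of _ "M$3$2"])
      (simp add: vec_eq_iff forall_3)
qed

lemma derivation_of_matrix_shape:
  assumes M: "M = vector [vector [0, 0, 0], vector [x21, x22, 0], vector [x31, x32, x22]]"
  shows "\<exists>D. r3_derivation D \<and> (\<forall>j. D (xb j) = (\<Sum>i\<in>UNIV. M$i$j *\<^sub>R xb i))"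
proof -
  obtain D where lin: "linear D" and D: "\<And>j. D (xb j) = (\<Sum>i\<in>UNIV. M$i$j *\<^sub>R xb i)"
    using dual_family_linear_extension[OF coord_linear coord_basis,
        of "\<lambda>j. \<Sum>i\<in>UNIV. M$i$j *\<^sub>R xb i"] by blast
  have D_basis: "D (xb 1) = x21 *\<^sub>R xb 2 + x31 *\<^sub>R xb 3"
    "D (xb 2) = x22 *\<^sub>R xb 2 + x32 *\<^sub>R xb 3" "D (xb 3) = x22 *\<^sub>R xb 3"
    by (simp_all add: D M sum_3)
  have leibniz: "\<forall>i j. D (r3_bracket (xb i) (xb j)) =
                            r3_bracket (D (xb i)) (xb j) + r3_bracket (xb i) (D (xb j))"
    unfolding forall_3
    by (simp add: brackets D_basis linear_0[OF lin] linear_neg[OF lin]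
        linear_diff[OF lin] linear_add[OF lin] linear_scale[OF lin] scaleR_add_right scaleR_diff_right)
  have "span (range xb) = UNIV"
    by (rule dual_family_span[OF coord_linear coord_basis]) simp
  then have "r3_derivation D"
    using leibniz by (intro r3_derivation_if_spanning[OF lin]) auto
  then show ?thesis
    using D by blast
qed

lemma der_matrices_eq:
  "der_matrices xb =
     {M. \<exists>x21 x22 x31 x32.
        M = vector [vector [0, 0, 0], vector [x21, x22, 0], vector [x31, x32, x22]]}"
  unfolding der_matrices_def
  using derivation_matrix_shape derivation_of_matrix_shape by blast

end

lemma bilinear_orthogonal_projection:
  assumes "bilinear B" and "B w w \<noteq> 0"
  shows "B (u - (B u w / B w w) *\<^sub>R w) w = 0"
  using assms by (simp add: bilinear_lsub bilinear_lmul)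

lemma inner_product_on_orthogonal_flag:
  assumes "inner_product_on B"
  obtains u1 u2 where "u1$1 = 1" "u2$1 = 0" "u2$2 = 1"
    "B u1 u2 = 0" "B u1 r3_e3 = 0" "B u2 r3_e3 = 0"
proof -
  have bl: "bilinear B" and pos: "\<And>x. x \<noteq> 0 \<Longrightarrow> 0 < B x x"
    using assms unfolding inner_product_on_def by auto
  define u2 where "u2 = r3_e2 - (B r3_e2 r3_e3 / B r3_e3 r3_e3) *\<^sub>R r3_e3"
  define v where "v = r3_e1 - (B r3_e1 r3_e3 / B r3_e3 r3_e3) *\<^sub>R r3_e3"
  define u1 where "u1 = v - (B v u2 / B u2 u2) *\<^sub>R u2"
  have coords: "u2$1 = 0" "u2$2 = 1" "u1$1 = 1" "r3_e3$3 = 1"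
    by (simp_all add: u1_def u2_def v_def r3_e1_def r3_e2_def r3_e3_def)
  then have "r3_e3 \<noteq> 0" and "u2 \<noteq> 0"
    by (metis zero_index zero_neq_one)+
  then have e3: "B r3_e3 r3_e3 \<noteq> 0" and "B u2 u2 \<noteq> 0"
    using pos by (metis less_irrefl)+
  have "B u1 u2 = 0"
    unfolding u1_def by (rule bilinear_orthogonal_projection[OF bl]) fact
  moreover have u2_e3: "B u2 r3_e3 = 0"
    unfolding u2_def by (rule bilinear_orthogonal_projection[OF bl e3])
  moreover have "B u1 r3_e3 = 0"
  proof -
    have "B v r3_e3 = 0"
      unfolding v_def by (rule bilinear_orthogonal_projection[OF bl e3])
    then show ?thesis
      using u2_e3 bl by (simp add: u1_def bilinear_lsub bilinear_lmul)
  qed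
  ultimately show ?thesis
    using coords that by blast
qed

lemma r3_adapted_orthonormal_basis:
  assumes ip: "inner_product_on B"
  obtains lam k :: real and xb :: "3 \<Rightarrow> real^3" where "lam > 0" "k > 0"
    "\<And>i j. k * B (xb i) (xb j) = (if i = j then 1 else 0)"
    "r3_bracket (xb 1) (xb 2) = xb 2 + lam *\<^sub>R xb 3"
    "r3_bracket (xb 1) (xb 3) = xb 3"
    "r3_bracket (xb 2) (xb 3) = 0"
proof -
  have bl: "bilinear B" and sym: "\<And>x y. B x y = B y x"
    and pos: "\<And>x. x \<noteq> 0 \<Longrightarrow> 0 < B x x"
    using ip unfolding inner_product_on_def by auto
  obtain u1 u2 where u: "u1$1 = 1" "u2$1 = 0" "u2$2 = 1"
    and orth: "B u1 u2 = 0" "B u1 r3_e3 = 0" "B u2 r3_e3 = 0"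
    using inner_product_on_orthogonal_flag[OF ip] by blast
  have e3: "r3_e3$1 = 0" "r3_e3$2 = 0" "r3_e3$3 = 1"
    by (simp_all add: r3_e3_def)
  have "u1 \<noteq> 0" "u2 \<noteq> 0" "r3_e3 \<noteq> 0"
    using u e3 by (metis zero_index zero_neq_one)+
  then have pos_u: "B u1 u1 > 0" "B u2 u2 > 0" "B r3_e3 r3_e3 > 0"
    using pos by auto
  define N where "N = B u1 u1"
  define p where "p = sqrt (N / B u2 u2)"
  define c where "c = sqrt (N / B r3_e3 r3_e3)"
  have N: "N > 0" and p: "p > 0" "p * p * B u2 u2 = N" and c: "c > 0" "c * c * B r3_e3 r3_e3 = N"
    using pos_u by (simp_all add: N_def p_def c_def)
  define xb :: "3 \<Rightarrow> real^3" where
    "xb i = (if i = 1 then u1 else if i = 2 then p *\<^sub>R u2 else c *\<^sub>R r3_e3)" for i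
  have x: "xb 1 = u1" "xb 2 = p *\<^sub>R u2" "xb 3 = c *\<^sub>R r3_e3"
    by (simp_all add: xb_def)
  show ?thesis
  proof (rule that[of "p / c" "1 / N" xb])
    show "p / c > 0" "1 / N > 0"
      using p c N by simp_all
    have "\<forall>i j. 1 / N * B (xb i) (xb j) = (if i = j then 1 else 0)"
      unfolding forall_3 using N p c orth sym[of u2 u1] sym[of r3_e3 u1] sym[of r3_e3 u2]
      by (simp add: x bilinear_lmul[OF bl] bilinear_rmul[OF bl] N_def[symmetric] field_simps)
    then show "1 / N * B (xb i) (xb j) = (if i = j then 1 else 0)" for i j
      by blast
    show "r3_bracket (xb 1) (xb 2) = xb 2 + (p / c) *\<^sub>R xb 3"
      using c u by (simp add: x r3_bracket_first_coord_one scaleR_add_right)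
    show "r3_bracket (xb 1) (xb 3) = xb 3"
      using u e3 by (simp add: x r3_bracket_first_coord_one)
    show "r3_bracket (xb 2) (xb 3) = 0"
      using u e3 by (simp add: x r3_bracket_first_coord_zero)
  qed
qed

theorem proposition4p6:
  fixes B :: "real^3 \<Rightarrow> real^3 \<Rightarrow> real"
  assumes "inner_product_on B"
  shows "\<exists>(lam::real) (k::real) (xb::3 \<Rightarrow> real^3). lam > 0 \<and> k > 0 \<and>
     (\<forall>i j. k * B (xb i) (xb j) = (if i = j then 1 else 0)) \<and>
     r3_bracket (xb 1) (xb 2) = xb 2 + lam *\<^sub>R xb 3 \<and>
     r3_bracket (xb 1) (xb 3) = xb 3 \<and>
     r3_bracket (xb 2) (xb 3) = 0 \<and>
     der_matrices xb =
       {M. \<exists>x21 x22 x31 x32.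
          M = vector [vector [0, 0, 0], vector [x21, x22, 0], vector [x31, x32, x22]]}"
proof -
  obtain lam k :: real and xb :: "3 \<Rightarrow> real^3" where lam: "lam > 0" and k: "k > 0"
    and orth: "\<And>i j. k * B (xb i) (xb j) = (if i = j then 1 else 0)"
    and brackets: "r3_bracket (xb 1) (xb 2) = xb 2 + lam *\<^sub>R xb 3"
      "r3_bracket (xb 1) (xb 3) = xb 3" "r3_bracket (xb 2) (xb 3) = 0"
    using r3_adapted_orthonormal_basis[OF assms] by metis
  have "linear (B v)" for v
    using assms by (simp add: inner_product_on_def bilinear_def)
  then have "linear (\<lambda>v. k * B (xb m) v)" for m
    using linear_compose_scale_right[of "B (xb m)" k] by simp
  with orth lam brackets have "r3_adapted_basis xb (\<lambda>m v. k * B (xb m) v) lam"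
    by (simp add: r3_adapted_basis_def)
  then show ?thesis
    using lam k orth brackets r3_adapted_basis.der_matrices_eq by blast
qed

end
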